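(* Fix $n\ge3$. In the infinite-block-length setting, the policy $\hat\pi_N$ induced by sequential Monte Carlo (as defined in the context) satisfies $$\mathbb{E}_{N\sim\mathrm{Poi}(n)|_{>0}}\big[D_{\mathrm{KL}}(\hat\pi_N\|\pi^\star_\beta)\big]\le\mathcal{O}\!\left(\frac{\log^2(n)}{n^2}\Big(\frac{\phi_{\max}}{\phi_{\min}}\Big)^2\right).$$
   Context: Prompts $x\in\mathcal{X}$ drawn from $\rho$, responses $y\in\mathcal{Y}$ (full responses). $\pi_{\mathrm{target}}$ and a generator $\pi_{\mathrm{gen}}$ are conditional distributions over responses (with $\pi_{\mathrm{gen}}$ of full support), $r(y|x)$ a reward, $\beta>0$. $\pi^\star_\beta(y|x)\propto\pi_{\mathrm{target}}(y|x)e^{\beta r(y|x)}$. Exponentiated score: $\phi_\beta(y|x)=\frac{\pi_{\mathrm{target}}(y|x)}{\pi_{\mathrm{gen}}(y|x)}e^{\beta r(y|x)}$, $\phi_{\max}=\max_{x,y}\phi_\beta(y|x)$, $\phi_{\min}=\min_{x,y}\phi_\beta(y|x)$. Sequential Monte Carlo with $N$ particles: given $x$, draw $Y_1,\dots,Y_N$ i.i.d. from $\pi_{\mathrm{gen}}(\cdot|x)$ and output $Y_i$ with probability $\phi_\beta(Y_i|x)/\sum_{j}\phi_\beta(Y_j|x)$; $\hat\pi_N$ is the induced output distribution (averaged over the draws). $\mathrm{Poi}(n)|_{>0}$ is the Poisson distribution with mean $n$ conditioned to be positive. $D_{\mathrm{KL}}(\pi_1\|\pi_2)=\mathbb{E}_{x\sim\rho}D_{\mathrm{KL}}(\pi_1(\cdot|x)\|\pi_2(\cdot|x))$.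 *)

theory Defs
  imports "HOL-Probability.Probability"
begin

text \<open>Prompts and responses are encoded as natural numbers; the prompt space X and the
response space Y are finite nonempty sets of naturals. Conditional distributions are
maps from prompts to pmfs on nat.\<close>

definition phi :: "(nat \<Rightarrow> nat pmf) \<Rightarrow> (nat \<Rightarrow> nat pmf) \<Rightarrow> (nat \<Rightarrow> nat \<Rightarrow> real) \<Rightarrow> real
    \<Rightarrow> nat \<Rightarrow> nat \<Rightarrow> real" where
  "phi tgt gen r \<beta> x y = pmf (tgt x) y / pmf (gen x) y * exp (\<beta> * r x y)"

definition phi_max :: "nat set \<Rightarrow> nat set \<Rightarrow> (nat \<Rightarrow> nat pmf) \<Rightarrow> (nat \<Rightarrow> nat pmf)
    \<Rightarrow> (nat \<Rightarrow> nat \<Rightarrow> real) \<Rightarrow> real \<Rightarrow> real" where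
  "phi_max X Y tgt gen r \<beta> = Max ((\<lambda>(x, y). phi tgt gen r \<beta> x y) ` (X \<times> Y))"

definition phi_min :: "nat set \<Rightarrow> nat set \<Rightarrow> (nat \<Rightarrow> nat pmf) \<Rightarrow> (nat \<Rightarrow> nat pmf)
    \<Rightarrow> (nat \<Rightarrow> nat \<Rightarrow> real) \<Rightarrow> real \<Rightarrow> real" where
  "phi_min X Y tgt gen r \<beta> = Min ((\<lambda>(x, y). phi tgt gen r \<beta> x y) ` (X \<times> Y))"

definition pistar :: "nat set \<Rightarrow> (nat \<Rightarrow> nat pmf) \<Rightarrow> (nat \<Rightarrow> nat \<Rightarrow> real) \<Rightarrow> real
    \<Rightarrow> nat \<Rightarrow> nat \<Rightarrow> real" where
  "pistar Y tgt r \<beta> x y =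
     pmf (tgt x) y * exp (\<beta> * r x y) / (\<Sum>y'\<in>Y. pmf (tgt x) y' * exp (\<beta> * r x y'))"

text \<open>Output distribution of SMC with N particles: draw Y_1..Y_N iid from gen(.|x)
(tuples indexed by {..<N}), output Y_i with probability phi(Y_i)/sum_j phi(Y_j),
averaged over the draws.\<close>
definition smc :: "nat set \<Rightarrow> (nat \<Rightarrow> nat pmf) \<Rightarrow> (nat \<Rightarrow> nat pmf) \<Rightarrow> (nat \<Rightarrow> nat \<Rightarrow> real)
    \<Rightarrow> real \<Rightarrow> nat \<Rightarrow> nat \<Rightarrow> nat \<Rightarrow> real" where
  "smc Y tgt gen r \<beta> N x y =
     (\<Sum>ys\<in>PiE {..<N} (\<lambda>_. Y).
        (\<Prod>i<N. pmf (gen x) (ys i)) *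
        ((\<Sum>i<N. if ys i = y then phi tgt gen r \<beta> x (ys i) else 0) /
         (\<Sum>j<N. phi tgt gen r \<beta> x (ys j))))"

definition KL_cond :: "nat set \<Rightarrow> (nat \<Rightarrow> real) \<Rightarrow> (nat \<Rightarrow> real) \<Rightarrow> real" where
  "KL_cond Y p q = (\<Sum>y\<in>Y. if p y = 0 then 0 else p y * ln (p y / q y))"

definition KL_avg :: "nat set \<Rightarrow> nat set \<Rightarrow> nat pmf \<Rightarrow> (nat \<Rightarrow> nat \<Rightarrow> real)
    \<Rightarrow> (nat \<Rightarrow> nat \<Rightarrow> real) \<Rightarrow> real" where
  "KL_avg X Y \<rho> p q = (\<Sum>x\<in>X. pmf \<rho> x * KL_cond Y (p x) (q x))"

definition poi_pos :: "real \<Rightarrow> nat \<Rightarrow> real" where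
  "poi_pos m k = (if k = 0 then 0
      else exp (- m) * m ^ k / fact k / (1 - exp (- m)))"

end

theory Submission
  imports Defs
begin

text \<open>
Fix a prompt, let g be the generator distribution and \<phi> the exponentiated score, with
a \<le> \<phi> \<le> b and mean \<mu> = E \<phi>, so that the tilted target is g \<phi> / \<mu>. Splitting the SMC output
according to which particle is selected gives q(y) = g(y) \<phi>(y) \<Sum>_i E[1 / (\<phi>(y) + S_i)], where
S_i is the sum of \<phi> over the other N - 1 particles. Expanding 1 / D to second order around
N \<mu>, the linear term has mean zero and the quadratic one is controlled by the variance of \<phi>,
which is at most b \<mu>. Hence for N \<ge> b/a the ratio q / \<pi>* is 1 + O((b/a) / N) uniformly, and
the KL divergence, being at most the \<chi>^2 divergence, is O((b/a)^2 / N^2); for every N the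
crude bound q \<le> (b/a) \<pi>* gives KL \<le> ln (b/a). Averaging over N ~ Poi(n) conditioned to be
positive, the terms with N \<ge> n/2 contribute O((ln n)^2 (b/a)^2 / n^2), and by a Chernoff bound
the lower tail N < n/2 has probability at most exp(-n/10) = O(1 / n^2).
\<close>

section \<open>Expectations under i.i.d. sampling\<close>

lemma sum_if_eq_notin:
  "i \<notin> I \<Longrightarrow> (\<Sum>j\<in>I. h (if j = i then y else ys j)) = (\<Sum>j\<in>I. h (ys j))"
  by (intro sum.cong) auto

locale prob_weights =
  fixes Y :: "'a set" and g :: "'a \<Rightarrow> real"
  assumes finite_support: "finite Y"
    and weight_nonneg: "y \<in> Y \<Longrightarrow> 0 \<le> g y"
    and sum_weights: "(\<Sum>y\<in>Y. g y) = 1"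
begin

lemma support_nonempty: "Y \<noteq> {}"
  using sum_weights by auto

definition iid_expect :: "'i set \<Rightarrow> (('i \<Rightarrow> 'a) \<Rightarrow> real) \<Rightarrow> real" where
  "iid_expect I F = (\<Sum>ys\<in>PiE I (\<lambda>_. Y). (\<Prod>i\<in>I. g (ys i)) * F ys)"

lemma iid_expect_empty: "iid_expect {} F = F (\<lambda>_. undefined)"
  by (simp add: iid_expect_def)

lemma iid_expect_insert:
  assumes "finite I" "i \<notin> I"
  shows "iid_expect (insert i I) F = (\<Sum>y\<in>Y. g y * iid_expect I (\<lambda>ys. F (ys(i := y))))"
proof -
  have "(\<Prod>j\<in>I. g (if j = i then y else ys j)) = (\<Prod>j\<in>I. g (ys j))" for ys y
    using assms(2) by (intro prod.cong) auto
  then have prod_upd: "(\<Prod>j\<in>insert i I. g (if j = i then y else ys j)) = g y * (\<Prod>j\<in>I. g (ys j))"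
    for ys y
    using assms by simp
  have "iid_expect (insert i I) F =
      (\<Sum>(y, ys)\<in>Y \<times> PiE I (\<lambda>_. Y). (\<Prod>j\<in>insert i I. g ((ys(i := y)) j)) * F (ys(i := y)))"
    unfolding iid_expect_def PiE_insert_eq
    by (subst sum.reindex[OF inj_combinator[OF assms(2)]]) (simp add: case_prod_beta)
  also have "\<dots> = (\<Sum>y\<in>Y. g y * iid_expect I (\<lambda>ys. F (ys(i := y))))"
    by (simp add: sum.cartesian_product[symmetric] prod_upd iid_expect_def sum_distrib_left
        mult.assoc)
  finally show ?thesis .
qed

lemma iid_expect_add: "iid_expect I (\<lambda>ys. F ys + G ys) = iid_expect I F + iid_expect I G"
  by (simp add: iid_expect_def algebra_simps sum.distrib)

lemma iid_expect_cmult: "iid_expect I (\<lambda>ys. c * F ys) = c * iid_expect I F"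
  by (simp add: iid_expect_def algebra_simps sum_distrib_left)

lemma iid_expect_cong:
  "(\<And>ys. ys \<in> PiE I (\<lambda>_. Y) \<Longrightarrow> F ys = G ys) \<Longrightarrow> iid_expect I F = iid_expect I G"
  unfolding iid_expect_def by (intro sum.cong) auto

lemma iid_expect_mono:
  assumes "\<And>ys. ys \<in> PiE I (\<lambda>_. Y) \<Longrightarrow> F ys \<le> G ys"
  shows "iid_expect I F \<le> iid_expect I G"
  unfolding iid_expect_def
proof (intro sum_mono mult_left_mono)
  fix ys assume ys: "ys \<in> PiE I (\<lambda>_. Y)"
  then show "F ys \<le> G ys" using assms by blast
  show "0 \<le> (\<Prod>i\<in>I. g (ys i))"
    using ys weight_nonneg by (intro prod_nonneg) (auto simp: PiE_iff)
qed

lemma iid_expect_const: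
  assumes "finite I"
  shows "iid_expect I (\<lambda>_. c) = c"
  using assms
  by (induction I rule: finite_induct)
     (simp_all add: iid_expect_empty iid_expect_insert sum_distrib_right[symmetric] sum_weights)

lemma iid_expect_nonneg:
  "(\<And>ys. ys \<in> PiE I (\<lambda>_. Y) \<Longrightarrow> 0 \<le> F ys) \<Longrightarrow> 0 \<le> iid_expect I F"
  using iid_expect_mono[of I "\<lambda>_. 0" F] by (simp add: iid_expect_def)

lemma iid_expect_sum_centered:
  assumes "finite I" and centered: "(\<Sum>y\<in>Y. g y * c y) = 0"
  shows "iid_expect I (\<lambda>ys. \<Sum>j\<in>I. c (ys j)) = 0"
  using assms(1)
proof (induction I rule: finite_induct)
  case empty
  then show ?case by (simp add: iid_expect_empty)
next
  case (insert i I)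
  then have "iid_expect (insert i I) (\<lambda>ys. \<Sum>j\<in>insert i I. c (ys j))
      = (\<Sum>y\<in>Y. g y * (c y + iid_expect I (\<lambda>ys. \<Sum>j\<in>I. c (ys j))))"
    by (simp add: iid_expect_insert sum_if_eq_notin iid_expect_add iid_expect_const)
  then show ?case using insert centered by simp
qed

lemma iid_expect_sum_centered_square:
  assumes "finite I" and centered: "(\<Sum>y\<in>Y. g y * c y) = 0"
  shows "iid_expect I (\<lambda>ys. (\<Sum>j\<in>I. c (ys j))\<^sup>2) = card I * (\<Sum>y\<in>Y. g y * (c y)\<^sup>2)"
  using assms(1)
proof (induction I rule: finite_induct)
  case empty
  then show ?case by (simp add: iid_expect_empty)
next
  case (insert i I)
  let ?T = "\<lambda>ys. \<Sum>j\<in>I. c (ys j)"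
  have cross: "iid_expect I (\<lambda>ys. 2 * c y * ?T ys) = 0" for y
    using iid_expect_cmult[where c="2 * c y" and I=I and F="?T"]
      iid_expect_sum_centered[OF insert(1) centered]
    by simp
  have "iid_expect (insert i I) (\<lambda>ys. (\<Sum>j\<in>insert i I. c (ys j))\<^sup>2)
      = (\<Sum>y\<in>Y. g y * iid_expect I (\<lambda>ys. (c y)\<^sup>2 + (2 * c y * ?T ys + (?T ys)\<^sup>2)))"
    using insert by (simp add: iid_expect_insert sum_if_eq_notin power2_sum algebra_simps)
  also have "\<dots> = (\<Sum>y\<in>Y. g y * ((c y)\<^sup>2 + card I * (\<Sum>y\<in>Y. g y * (c y)\<^sup>2)))"
    by (simp only: iid_expect_add iid_expect_const[OF insert(1)] cross insert.IH) simp
  also have "\<dots> = (\<Sum>y\<in>Y. g y * (c y)\<^sup>2) + card I * (\<Sum>y\<in>Y. g y * (c y)\<^sup>2)"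
    by (simp add: algebra_simps sum.distrib sum_distrib_right[symmetric] sum_weights)
  finally show ?case using insert by (simp add: algebra_simps)
qed

lemma iid_expect_sum:
  "iid_expect I (\<lambda>ys. \<Sum>k\<in>K. F k ys) = (\<Sum>k\<in>K. iid_expect I (F k))"
  unfolding iid_expect_def sum_distrib_left by (rule sum.swap)

lemma iid_expect_select:
  assumes "finite I" "i \<notin> I" "y \<in> Y"
  shows "iid_expect (insert i I) (\<lambda>ys. if ys i = y then F ys else 0)
    = g y * iid_expect I (\<lambda>ys. F (ys(i := y)))"
proof -
  have "iid_expect (insert i I) (\<lambda>ys. if ys i = y then F ys else 0)
      = (\<Sum>z\<in>Y. if z = y then g y * iid_expect I (\<lambda>ys. F (ys(i := y))) else 0)"
    unfolding iid_expect_insert[OF assms(1,2)] by (intro sum.cong) (auto simp: iid_expect_def)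
  then show ?thesis
    using finite_support assms(3) by simp
qed

end

section \<open>The expected inverse of a sum of i.i.d. potentials\<close>

lemma inverse_expansion:
  fixes d m :: real
  assumes "0 < d" "0 < m"
  shows "m / d = 1 - (d - m) / m + (d - m)\<^sup>2 / (m * d)"
  using assms by (simp add: field_simps power2_eq_square)

lemma card_lessThan_remove:
  "i < N \<Longrightarrow> real (card ({..<N} - {i})) + 1 = real N"
  by (simp add: of_nat_diff)

locale bounded_potential = prob_weights +
  fixes \<phi> :: "'a \<Rightarrow> real" and a b :: real
  assumes lower_pos: "0 < a"
    and potential_ge: "y \<in> Y \<Longrightarrow> a \<le> \<phi> y"
    and potential_le: "y \<in> Y \<Longrightarrow> \<phi> y \<le> b"
begin

definition mean :: real where
  "mean = (\<Sum>y\<in>Y. g y * \<phi> y)"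

definition variance :: real where
  "variance = (\<Sum>y\<in>Y. g y * (\<phi> y - mean)\<^sup>2)"

lemma lower_le_upper: "a \<le> b"
  using support_nonempty potential_ge potential_le by (fastforce intro: order_trans)

lemma potential_pos: "y \<in> Y \<Longrightarrow> 0 < \<phi> y"
  using lower_pos potential_ge by (fastforce intro: less_le_trans)

lemma mean_ge: "a \<le> mean"
proof -
  have "(\<Sum>y\<in>Y. g y * a) \<le> mean"
    unfolding mean_def using potential_ge weight_nonneg by (intro sum_mono mult_left_mono) auto
  then show ?thesis by (simp add: sum_distrib_right[symmetric] sum_weights)
qed

lemma mean_le: "mean \<le> b"
proof -
  have "mean \<le> (\<Sum>y\<in>Y. g y * b)"
    unfolding mean_def using potential_le weight_nonneg by (intro sum_mono mult_left_mono) auto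
  then show ?thesis by (simp add: sum_distrib_right[symmetric] sum_weights)
qed

lemma mean_pos: "0 < mean"
  using lower_pos mean_ge by linarith

lemma sum_centered: "(\<Sum>y\<in>Y. g y * (\<phi> y - mean)) = 0"
  by (simp add: right_diff_distrib sum_subtractf sum_distrib_right[symmetric] sum_weights
      mean_def[symmetric])

lemma variance_nonneg: "0 \<le> variance"
  unfolding variance_def by (intro sum_nonneg mult_nonneg_nonneg weight_nonneg) auto

lemma variance_le: "variance \<le> b * mean"
proof -
  have "variance = (\<Sum>y\<in>Y. g y * (\<phi> y)\<^sup>2) - 2 * mean * (\<Sum>y\<in>Y. g y * \<phi> y)
      + mean\<^sup>2 * (\<Sum>y\<in>Y. g y)"
    unfolding variance_def
    by (simp add: power2_diff algebra_simps sum.distrib sum_subtractf sum_distrib_left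
        sum_distrib_right)
  also have "\<dots> = (\<Sum>y\<in>Y. g y * (\<phi> y)\<^sup>2) - mean\<^sup>2"
    by (simp add: sum_weights mean_def[symmetric] power2_eq_square)
  also have "\<dots> \<le> (\<Sum>y\<in>Y. g y * (b * \<phi> y))"
  proof -
    have "(\<phi> y)\<^sup>2 \<le> b * \<phi> y" if "y \<in> Y" for y
      unfolding power2_eq_square
      using potential_le[OF that] potential_pos[OF that] by (intro mult_right_mono) auto
    then have "(\<Sum>y\<in>Y. g y * (\<phi> y)\<^sup>2) \<le> (\<Sum>y\<in>Y. g y * (b * \<phi> y))"
      using weight_nonneg by (intro sum_mono mult_left_mono) auto
    then show ?thesis by (smt (verit) zero_le_power2)
  qed
  also have "\<dots> = b * mean"
    by (simp add: mean_def sum_distrib_left algebra_simps)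
  finally show ?thesis .
qed

lemma denominator_ge:
  assumes "finite I" "a \<le> z" "ys \<in> PiE I (\<lambda>_. Y)"
  shows "(real (card I) + 1) * a \<le> z + (\<Sum>j\<in>I. \<phi> (ys j))"
proof -
  have "(\<Sum>j\<in>I. a) \<le> (\<Sum>j\<in>I. \<phi> (ys j))"
    using assms(3) potential_ge by (intro sum_mono) (auto simp: PiE_iff)
  then show ?thesis using assms(2) by (simp add: algebra_simps)
qed

lemma denominator_pos:
  assumes "finite I" "a \<le> z" "ys \<in> PiE I (\<lambda>_. Y)"
  shows "0 < z + (\<Sum>j\<in>I. \<phi> (ys j))"
proof -
  have "0 < (real (card I) + 1) * a"
    using lower_pos by simp
  then show ?thesis using denominator_ge[OF assms] by linarith
qed

lemma iid_expect_inverse_le: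
  assumes "finite I" "a \<le> z"
  shows "iid_expect I (\<lambda>ys. 1 / (z + (\<Sum>j\<in>I. \<phi> (ys j)))) \<le> 1 / ((real (card I) + 1) * a)"
proof -
  have "iid_expect I (\<lambda>ys. 1 / (z + (\<Sum>j\<in>I. \<phi> (ys j))))
      \<le> iid_expect I (\<lambda>_. 1 / ((real (card I) + 1) * a))"
    using denominator_ge[OF assms] denominator_pos[OF assms] lower_pos
    by (intro iid_expect_mono divide_left_mono mult_pos_pos) auto
  then show ?thesis using iid_expect_const[OF assms(1)] by simp
qed

text \<open>The linear term of the expansion of 1 / D around m has mean zero.\<close>

lemma iid_expect_inverse_eq:
  assumes "finite I" "a \<le> z"
  defines "m \<equiv> (real (card I) + 1) * mean"
  shows "m * iid_expect I (\<lambda>ys. 1 / (z + (\<Sum>j\<in>I. \<phi> (ys j)))) = 1 - (z - mean) / m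
    + iid_expect I (\<lambda>ys. (z + (\<Sum>j\<in>I. \<phi> (ys j)) - m)\<^sup>2 / (m * (z + (\<Sum>j\<in>I. \<phi> (ys j)))))"
proof -
  define D where "D = (\<lambda>ys. z + (\<Sum>j\<in>I. \<phi> (ys j)))"
  define T where "T = (\<lambda>ys. \<Sum>j\<in>I. \<phi> (ys j) - mean)"
  have m_pos: "0 < m"
    unfolding m_def using mean_pos by simp
  have D_pos: "0 < D ys" if "ys \<in> PiE I (\<lambda>_. Y)" for ys
    unfolding D_def using denominator_pos[OF assms(1,2) that] .
  have "D ys - m = (z - mean) + T ys" for ys
    unfolding D_def T_def m_def by (simp add: sum_subtractf algebra_simps)
  then have pointwise:
    "m / D ys = (1 - (z - mean) / m) + ((- 1 / m) * T ys + (D ys - m)\<^sup>2 / (m * D ys))"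
    if "ys \<in> PiE I (\<lambda>_. Y)" for ys
    using inverse_expansion[OF D_pos[OF that] m_pos]
    by (simp add: add_divide_distrib diff_divide_distrib)
  have "m * iid_expect I (\<lambda>ys. 1 / D ys) = iid_expect I (\<lambda>ys. m / D ys)"
    using iid_expect_cmult[where c=m and I=I and F="\<lambda>ys. 1 / D ys"] by simp
  also have "\<dots> = iid_expect I
      (\<lambda>ys. (1 - (z - mean) / m) + ((- 1 / m) * T ys + (D ys - m)\<^sup>2 / (m * D ys)))"
    by (rule iid_expect_cong) (rule pointwise)
  also have "\<dots> = 1 - (z - mean) / m + iid_expect I (\<lambda>ys. (D ys - m)\<^sup>2 / (m * D ys))"
    using iid_expect_sum_centered[OF assms(1) sum_centered]
    by (simp only: iid_expect_add iid_expect_cmult iid_expect_const[OF assms(1)] T_def)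
  finally show ?thesis
    unfolding D_def .
qed

lemma iid_expect_inverse_bounds:
  assumes "finite I" "a \<le> z"
  defines "m \<equiv> (real (card I) + 1) * mean"
  shows "1 - (z - mean) / m \<le> m * iid_expect I (\<lambda>ys. 1 / (z + (\<Sum>j\<in>I. \<phi> (ys j))))"
    and "m * iid_expect I (\<lambda>ys. 1 / (z + (\<Sum>j\<in>I. \<phi> (ys j))))
      \<le> 1 - (z - mean) / m
        + ((z - mean)\<^sup>2 + real (card I) * variance) / (m * ((real (card I) + 1) * a))"
proof -
  define c where "c = z - mean"
  define D where "D = (\<lambda>ys. z + (\<Sum>j\<in>I. \<phi> (ys j)))"
  define T where "T = (\<lambda>ys. \<Sum>j\<in>I. \<phi> (ys j) - mean)"
  define R where "R = (\<lambda>ys. (D ys - m)\<^sup>2 / (m * D ys))"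
  have expansion: "m * iid_expect I (\<lambda>ys. 1 / D ys) = 1 - c / m + iid_expect I R"
    unfolding R_def D_def c_def m_def by (rule iid_expect_inverse_eq[OF assms(1,2)])
  have m_pos: "0 < m"
    unfolding m_def using mean_pos by simp
  have D_ge: "(real (card I) + 1) * a \<le> D ys" and D_pos: "0 < D ys"
    if "ys \<in> PiE I (\<lambda>_. Y)" for ys
    unfolding D_def using denominator_ge[OF assms(1,2) that] denominator_pos[OF assms(1,2) that] .
  have "0 \<le> iid_expect I R"
    using D_pos m_pos unfolding R_def by (intro iid_expect_nonneg divide_nonneg_pos) auto
  then show "1 - (z - mean) / m \<le> m * iid_expect I (\<lambda>ys. 1 / (z + (\<Sum>j\<in>I. \<phi> (ys j))))"
    using expansion unfolding c_def D_def by simp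
  define k where "k = 1 / (m * ((real (card I) + 1) * a))"
  have "D ys - m = c + T ys" for ys
    unfolding D_def T_def c_def m_def by (simp add: sum_subtractf algebra_simps)
  then have "iid_expect I R \<le> iid_expect I (\<lambda>ys. k * (c\<^sup>2 + ((2 * c) * T ys + (T ys)\<^sup>2)))"
  proof (intro iid_expect_mono)
    fix ys assume ys: "ys \<in> PiE I (\<lambda>_. Y)"
    have "R ys \<le> (D ys - m)\<^sup>2 / (m * ((real (card I) + 1) * a))"
      unfolding R_def using D_ge[OF ys] D_pos[OF ys] m_pos lower_pos
      by (intro divide_left_mono mult_left_mono mult_pos_pos) auto
    then show "R ys \<le> k * (c\<^sup>2 + ((2 * c) * T ys + (T ys)\<^sup>2))"
      unfolding k_def \<open>D ys - m = c + T ys\<close> by (simp add: power2_sum add_ac)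
  qed
  also have "\<dots> = k * (c\<^sup>2 + card I * variance)"
    using iid_expect_sum_centered[OF assms(1) sum_centered]
      iid_expect_sum_centered_square[OF assms(1) sum_centered]
    by (simp only: iid_expect_add iid_expect_cmult iid_expect_const[OF assms(1)] T_def)
      (simp add: variance_def)
  finally show "m * iid_expect I (\<lambda>ys. 1 / (z + (\<Sum>j\<in>I. \<phi> (ys j))))
      \<le> 1 - (z - mean) / m
        + ((z - mean)\<^sup>2 + real (card I) * variance) / (m * ((real (card I) + 1) * a))"
    using expansion unfolding c_def D_def k_def by simp
qed

lemma centered_abs_le: "a \<le> z \<Longrightarrow> z \<le> b \<Longrightarrow> \<bar>z - mean\<bar> \<le> b"
  using mean_ge mean_le lower_pos by linarith

lemma linear_term_le:
  assumes "a \<le> z" "z \<le> b" "0 < n"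
  shows "\<bar>(z - mean) / (n * mean)\<bar> \<le> b / a / n"
proof -
  have "\<bar>(z - mean) / (n * mean)\<bar> = \<bar>z - mean\<bar> / (n * mean)"
    using assms(3) mean_pos by simp
  also have "\<dots> \<le> b / (n * a)"
    using centered_abs_le[OF assms(1,2)] assms(3) mean_ge lower_pos by (intro frac_le) auto
  finally show ?thesis
    by (simp add: ac_simps)
qed

lemma quadratic_term_le:
  assumes "a \<le> z" "z \<le> b" "1 \<le> n"
  shows "((z - mean)\<^sup>2 + (n - 1) * variance) / (n * mean * (n * a)) \<le> (b / a / n)\<^sup>2 + b / a / n"
proof -
  have "(z - mean)\<^sup>2 \<le> b\<^sup>2"
    using centered_abs_le[OF assms(1,2)] lower_le_upper lower_pos
    by (metis abs_le_square_iff abs_of_nonneg less_le_trans less_imp_le)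
  moreover have "(n - 1) * variance \<le> n * (b * mean)"
    using assms(3) variance_nonneg variance_le by (intro mult_mono) auto
  ultimately have "((z - mean)\<^sup>2 + (n - 1) * variance) / (n * mean * (n * a))
      \<le> (b\<^sup>2 + n * (b * mean)) / (n * mean * (n * a))"
    using assms(3) mean_pos lower_pos by (intro divide_right_mono) auto
  also have "\<dots> = b\<^sup>2 / (n\<^sup>2 * mean * a) + b / a / n"
    using assms(3) mean_pos lower_pos by (simp add: field_simps power2_eq_square)
  also have "b\<^sup>2 / (n\<^sup>2 * mean * a) \<le> b\<^sup>2 / (n\<^sup>2 * a * a)"
    using assms(3) mean_ge lower_pos by (intro divide_left_mono mult_left_mono mult_pos_pos) auto
  also have "b\<^sup>2 / (n\<^sup>2 * a * a) = (b / a / n)\<^sup>2"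
    by (simp add: power2_eq_square)
  finally show ?thesis
    by simp
qed

lemma iid_expect_inverse_close:
  assumes "finite I" "a \<le> z" "z \<le> b" "b / a \<le> real (card I) + 1"
  shows "\<bar>(real (card I) + 1) * mean * iid_expect I (\<lambda>ys. 1 / (z + (\<Sum>j\<in>I. \<phi> (ys j)))) - 1\<bar>
    \<le> 3 * (b / a) / (real (card I) + 1)"
proof -
  define n where "n = real (card I) + 1"
  define \<epsilon> where "\<epsilon> = b / a / n"
  define E where "E = iid_expect I (\<lambda>ys. 1 / (z + (\<Sum>j\<in>I. \<phi> (ys j))))"
  have n: "1 \<le> n"
    unfolding n_def by simp
  have linear: "\<bar>(z - mean) / (n * mean)\<bar> \<le> \<epsilon>"
    unfolding \<epsilon>_def using linear_term_le[OF assms(2,3)] n by simp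
  have quadratic: "((z - mean)\<^sup>2 + (n - 1) * variance) / (n * mean * (n * a)) \<le> \<epsilon>\<^sup>2 + \<epsilon>"
    unfolding \<epsilon>_def using quadratic_term_le[OF assms(2,3) n] .
  have "0 \<le> \<epsilon>" "\<epsilon> \<le> 1"
    unfolding \<epsilon>_def n_def using assms(4) lower_le_upper lower_pos by (simp_all add: field_simps)
  then have "\<epsilon>\<^sup>2 \<le> \<epsilon>"
    by (simp add: power2_eq_square mult_left_le)
  moreover have "1 - (z - mean) / (n * mean) \<le> n * mean * E"
    "n * mean * E \<le> 1 - (z - mean) / (n * mean)
      + ((z - mean)\<^sup>2 + (n - 1) * variance) / (n * mean * (n * a))"
    using iid_expect_inverse_bounds[OF assms(1,2)] unfolding n_def E_def by simp_all
  ultimately have "\<bar>n * mean * E - 1\<bar> \<le> 3 * \<epsilon>"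
    using linear quadratic unfolding abs_le_iff by linarith
  then show ?thesis
    unfolding n_def E_def \<epsilon>_def by simp
qed

section \<open>Self-normalised resampling\<close>

definition resample :: "nat \<Rightarrow> 'a \<Rightarrow> real" where
  "resample N y = iid_expect {..<N}
     (\<lambda>ys. (\<Sum>i<N. if ys i = y then \<phi> (ys i) else 0) / (\<Sum>j<N. \<phi> (ys j)))"

definition tilted :: "'a \<Rightarrow> real" where
  "tilted y = g y * \<phi> y / mean"

text \<open>Condition on the index i of the selected particle, and draw it first.\<close>

lemma resample_eq:
  assumes "y \<in> Y"
  shows "resample N y = g y * \<phi> y *
    (\<Sum>i<N. iid_expect ({..<N} - {i}) (\<lambda>ys. 1 / (\<phi> y + (\<Sum>j\<in>{..<N} - {i}. \<phi> (ys j)))))"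
proof -
  have "resample N y =
      (\<Sum>i<N. iid_expect {..<N} (\<lambda>ys. if ys i = y then \<phi> y / (\<Sum>j<N. \<phi> (ys j)) else 0))"
    unfolding resample_def sum_divide_distrib iid_expect_sum[symmetric]
    by (intro iid_expect_cong sum.cong) auto
  also have "\<dots> = (\<Sum>i<N. g y * \<phi> y *
      iid_expect ({..<N} - {i}) (\<lambda>ys. 1 / (\<phi> y + (\<Sum>j\<in>{..<N} - {i}. \<phi> (ys j)))))"
  proof (intro sum.cong refl)
    fix i assume "i \<in> {..<N}"
    define I where "I = {..<N} - {i}"
    have split: "{..<N} = insert i I" "i \<notin> I" "finite I"
      using \<open>i \<in> {..<N}\<close> unfolding I_def by auto
    have "(\<Sum>j<N. \<phi> ((ys(i := y)) j)) = \<phi> y + (\<Sum>j\<in>I. \<phi> (ys j))" for ys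
      unfolding split(1) using split(2,3) by (simp add: sum_if_eq_notin)
    then have "iid_expect (insert i I) (\<lambda>ys. if ys i = y then \<phi> y / (\<Sum>j<N. \<phi> (ys j)) else 0)
        = g y * \<phi> y * iid_expect I (\<lambda>ys. 1 / (\<phi> y + (\<Sum>j\<in>I. \<phi> (ys j))))"
      using iid_expect_select[OF split(3,2) assms, where F="\<lambda>ys. \<phi> y / (\<Sum>j<N. \<phi> (ys j))"]
        iid_expect_cmult[where c="\<phi> y" and I=I and F="\<lambda>ys. 1 / (\<phi> y + (\<Sum>j\<in>I. \<phi> (ys j)))"]
      by simp
    then show "iid_expect {..<N} (\<lambda>ys. if ys i = y then \<phi> y / (\<Sum>j<N. \<phi> (ys j)) else 0) =
        g y * \<phi> y * iid_expect ({..<N} - {i}) (\<lambda>ys. 1 / (\<phi> y + (\<Sum>j\<in>{..<N} - {i}. \<phi> (ys j))))"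
      unfolding I_def[symmetric] by (simp only: split(1))
  qed
  finally show ?thesis
    by (simp add: sum_distrib_left)
qed

lemma sum_resample:
  assumes "1 \<le> N"
  shows "(\<Sum>y\<in>Y. resample N y) = 1"
proof -
  have "(\<Sum>y\<in>Y. \<Sum>i<N. if ys i = y then \<phi> (ys i) else 0) / (\<Sum>j<N. \<phi> (ys j)) = 1"
    if "ys \<in> PiE {..<N} (\<lambda>_. Y)" for ys
  proof -
    have "(\<Sum>y\<in>Y. \<Sum>i<N. if ys i = y then \<phi> (ys i) else 0) = (\<Sum>i<N. \<phi> (ys i))"
      using that finite_support by (subst sum.swap) (auto simp: PiE_iff)
    moreover have "0 < (\<Sum>i<N. \<phi> (ys i))"
      using that assms potential_pos by (intro sum_pos) (auto simp: PiE_iff lessThan_empty_iff)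
    ultimately show ?thesis by simp
  qed
  then have "(\<Sum>y\<in>Y. resample N y) = iid_expect {..<N} (\<lambda>_. 1)"
    unfolding resample_def iid_expect_sum[symmetric] sum_divide_distrib[symmetric]
    by (rule iid_expect_cong)
  then show ?thesis
    using iid_expect_const[of "{..<N}"] by simp
qed

lemma resample_nonneg:
  "0 \<le> resample N y"
  unfolding resample_def
  using potential_pos by (intro iid_expect_nonneg divide_nonneg_nonneg sum_nonneg)
    (auto simp: PiE_iff less_imp_le)

lemma sum_tilted: "(\<Sum>y\<in>Y. tilted y) = 1"
  using mean_pos by (simp add: tilted_def sum_divide_distrib[symmetric] mean_def)

lemma tilted_nonneg: "y \<in> Y \<Longrightarrow> 0 \<le> tilted y"
  unfolding tilted_def using weight_nonneg potential_pos mean_pos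
  by (intro divide_nonneg_pos mult_nonneg_nonneg) (auto simp: less_imp_le)

lemma tilted_pos: "y \<in> Y \<Longrightarrow> 0 < g y \<Longrightarrow> 0 < tilted y"
  unfolding tilted_def using potential_pos mean_pos by simp

lemma resample_le_tilted:
  assumes "y \<in> Y" "1 \<le> N"
  shows "resample N y \<le> b / a * tilted y"
proof -
  have "iid_expect ({..<N} - {i}) (\<lambda>ys. 1 / (\<phi> y + (\<Sum>j\<in>{..<N} - {i}. \<phi> (ys j)))) \<le> 1 / (N * a)"
    if "i < N" for i
    using iid_expect_inverse_le[of "{..<N} - {i}" "\<phi> y"] potential_ge[OF assms(1)]
    by (simp add: card_lessThan_remove[OF that])
  then have "resample N y \<le> g y * \<phi> y * (\<Sum>i<N. 1 / (N * a))"
    unfolding resample_eq[OF assms(1)]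
    using weight_nonneg[OF assms(1)] potential_pos[OF assms(1)]
    by (intro mult_left_mono sum_mono) auto
  also have "\<dots> = g y * \<phi> y / a"
    using assms(2) by simp
  also have "\<dots> = tilted y * (mean / a)"
    unfolding tilted_def using mean_pos by simp
  also have "\<dots> \<le> b / a * tilted y"
    using mean_le lower_pos tilted_nonneg[OF assms(1)]
    by (simp add: mult.commute mult_right_mono divide_right_mono)
  finally show ?thesis .
qed

lemma resample_close_tilted:
  assumes "y \<in> Y" "b / a \<le> N"
  shows "\<bar>resample N y - tilted y\<bar> \<le> 3 * (b / a) / N * tilted y"
proof -
  define Q where "Q i = iid_expect ({..<N} - {i}) (\<lambda>ys. 1 / (\<phi> y + (\<Sum>j\<in>{..<N} - {i}. \<phi> (ys j))))"
    for i
  have "1 \<le> b / a"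
    using lower_le_upper lower_pos by simp
  then have N_pos: "0 < real N"
    using assms(2) by linarith
  have Q_close: "\<bar>N * mean * Q i - 1\<bar> \<le> 3 * (b / a) / N" if "i < N" for i
    using iid_expect_inverse_close[of "{..<N} - {i}" "\<phi> y"] assms
      potential_ge[OF assms(1)] potential_le[OF assms(1)]
    unfolding Q_def by (simp add: card_lessThan_remove[OF that])
  have "resample N y - tilted y = tilted y * ((\<Sum>i<N. N * mean * Q i - 1) / N)"
    unfolding resample_eq[OF assms(1)] tilted_def Q_def[symmetric]
    using mean_pos N_pos
    by (simp add: sum_subtractf sum_distrib_left[symmetric] sum_distrib_right[symmetric]
        field_simps)
  also have "\<bar>\<dots>\<bar> \<le> tilted y * ((\<Sum>i<N. 3 * (b / a) / N) / N)"
  proof -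
    have "\<bar>(\<Sum>i<N. N * mean * Q i - 1) / N\<bar> \<le> (\<Sum>i<N. \<bar>N * mean * Q i - 1\<bar>) / N"
      using N_pos by (simp add: sum_abs divide_right_mono)
    also have "\<dots> \<le> (\<Sum>i<N. 3 * (b / a) / N) / N"
      using Q_close N_pos by (intro divide_right_mono sum_mono) auto
    finally show ?thesis
      unfolding abs_mult abs_of_nonneg[OF tilted_nonneg[OF assms(1)]]
      by (rule mult_left_mono[OF _ tilted_nonneg[OF assms(1)]])
  qed
  also have "\<dots> = 3 * (b / a) / N * tilted y"
    using N_pos by simp
  finally show ?thesis .
qed

end

section \<open>Bounds on the Kullback-Leibler divergence\<close>

lemma KL_cond_nonneg:
  assumes "(\<Sum>y\<in>Y. p y) = 1" "(\<Sum>y\<in>Y. q y) = 1"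
    and "\<And>y. y \<in> Y \<Longrightarrow> 0 < p y" "\<And>y. y \<in> Y \<Longrightarrow> 0 \<le> q y"
  shows "0 \<le> KL_cond Y q p"
proof -
  have "q y - p y \<le> (if q y = 0 then 0 else q y * ln (q y / p y))" if "y \<in> Y" for y
  proof (cases "q y = 0")
    case True
    then show ?thesis
      using assms(3)[OF that] by simp
  next
    case False
    then have q_pos: "0 < q y"
      using assms(4)[OF that] by simp
    have "ln (p y / q y) \<le> p y / q y - 1"
      using assms(3)[OF that] q_pos by (intro ln_le_minus_one) simp
    then have "q y * (1 - p y / q y) \<le> q y * ln (q y / p y)"
      using assms(3)[OF that] q_pos by (intro mult_left_mono) (auto simp: ln_div)
    then show ?thesis
      using False q_pos by (simp add: algebra_simps)
  qed
  then have "(\<Sum>y\<in>Y. q y - p y) \<le> KL_cond Y q p"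
    unfolding KL_cond_def by (rule sum_mono)
  then show ?thesis
    using assms(1,2) by (simp add: sum_subtractf)
qed

lemma KL_cond_le_ln:
  assumes "(\<Sum>y\<in>Y. q y) = 1"
    and "\<And>y. y \<in> Y \<Longrightarrow> 0 < p y" "\<And>y. y \<in> Y \<Longrightarrow> 0 \<le> q y"
    and "\<And>y. y \<in> Y \<Longrightarrow> q y \<le> \<kappa> * p y"
  shows "KL_cond Y q p \<le> ln \<kappa>"
proof -
  have "(if q y = 0 then 0 else q y * ln (q y / p y)) \<le> q y * ln \<kappa>" if "y \<in> Y" for y
  proof (cases "q y = 0")
    case False
    then have "0 < q y"
      using assms(3)[OF that] by simp
    moreover have "q y / p y \<le> \<kappa>" "0 < q y / p y"
      using assms(2,4)[OF that] \<open>0 < q y\<close> by (simp_all add: divide_le_eq)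
    ultimately show ?thesis
      using False by (simp add: mult_left_mono)
  qed simp
  then have "KL_cond Y q p \<le> (\<Sum>y\<in>Y. q y * ln \<kappa>)"
    unfolding KL_cond_def by (rule sum_mono)
  then show ?thesis
    using assms(1) by (simp add: sum_distrib_right[symmetric])
qed

lemma KL_cond_le_chi_square:
  assumes "(\<Sum>y\<in>Y. p y) = 1" "(\<Sum>y\<in>Y. q y) = 1"
    and "\<And>y. y \<in> Y \<Longrightarrow> 0 < p y" "\<And>y. y \<in> Y \<Longrightarrow> 0 \<le> q y"
  shows "KL_cond Y q p \<le> (\<Sum>y\<in>Y. (q y - p y)\<^sup>2 / p y)"
proof -
  have "(if q y = 0 then 0 else q y * ln (q y / p y)) \<le> (q y - p y)\<^sup>2 / p y + (q y - p y)"
    if "y \<in> Y" for y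
  proof (cases "q y = 0")
    case True
    then show ?thesis
      using assms(3)[OF that] by (simp add: power2_eq_square)
  next
    case False
    then have "0 < q y"
      using assms(4)[OF that] by simp
    then have "q y * ln (q y / p y) \<le> q y * (q y / p y - 1)"
      using assms(3)[OF that] by (intro mult_left_mono ln_le_minus_one) auto
    also have "\<dots> = (q y - p y)\<^sup>2 / p y + (q y - p y)"
      using assms(3)[OF that] by (simp add: field_simps power2_eq_square)
    finally show ?thesis
      using False by simp
  qed
  then have "KL_cond Y q p \<le> (\<Sum>y\<in>Y. (q y - p y)\<^sup>2 / p y + (q y - p y))"
    unfolding KL_cond_def by (rule sum_mono)
  then show ?thesis
    using assms(1,2) by (simp add: sum.distrib sum_subtractf)
qed

lemma KL_cond_le_square_of_relative_error:
  assumes "(\<Sum>y\<in>Y. p y) = 1" "(\<Sum>y\<in>Y. q y) = 1"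
    and "\<And>y. y \<in> Y \<Longrightarrow> 0 < p y" "\<And>y. y \<in> Y \<Longrightarrow> 0 \<le> q y"
    and "\<And>y. y \<in> Y \<Longrightarrow> \<bar>q y - p y\<bar> \<le> \<epsilon> * p y"
  shows "KL_cond Y q p \<le> \<epsilon>\<^sup>2"
proof -
  have "(q y - p y)\<^sup>2 / p y \<le> \<epsilon>\<^sup>2 * p y" if "y \<in> Y" for y
  proof -
    have "(q y - p y)\<^sup>2 \<le> (\<epsilon> * p y)\<^sup>2"
      using assms(5)[OF that] by (metis abs_ge_zero abs_le_square_iff order_trans abs_of_nonneg
          power2_abs)
    then show ?thesis
      using assms(3)[OF that] by (simp add: divide_le_eq power2_eq_square mult_ac)
  qed
  then have "(\<Sum>y\<in>Y. (q y - p y)\<^sup>2 / p y) \<le> \<epsilon>\<^sup>2"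
    using sum_mono[of Y "\<lambda>y. (q y - p y)\<^sup>2 / p y" "\<lambda>y. \<epsilon>\<^sup>2 * p y"] assms(1)
    by (simp add: sum_distrib_left[symmetric])
  then show ?thesis
    using KL_cond_le_chi_square[OF assms(1-4)] by linarith
qed

lemma KL_cond_smc_pistar:
  assumes "finite Y" "set_pmf (gen x) = Y" "0 < a"
    and "\<And>y. y \<in> Y \<Longrightarrow> a \<le> phi tgt gen r \<beta> x y" "\<And>y. y \<in> Y \<Longrightarrow> phi tgt gen r \<beta> x y \<le> b"
    and "1 \<le> N"
  shows "0 \<le> KL_cond Y (smc Y tgt gen r \<beta> N x) (pistar Y tgt r \<beta> x)"
    and "KL_cond Y (smc Y tgt gen r \<beta> N x) (pistar Y tgt r \<beta> x) \<le> ln (b / a)"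
    and "b / a \<le> N \<Longrightarrow>
      KL_cond Y (smc Y tgt gen r \<beta> N x) (pistar Y tgt r \<beta> x) \<le> 9 * (b / a)\<^sup>2 / (real N)\<^sup>2"
proof -
  interpret bounded_potential Y "pmf (gen x)" "phi tgt gen r \<beta> x" a b
    by unfold_locales (use assms in \<open>auto simp: sum_pmf_eq_1\<close>)
  have gen_pos: "0 < pmf (gen x) y" if "y \<in> Y" for y
    using that assms(2) by (simp add: pmf_positive)
  have weighted_phi: "pmf (gen x) y * phi tgt gen r \<beta> x y = pmf (tgt x) y * exp (\<beta> * r x y)"
    if "y \<in> Y" for y
    using gen_pos[OF that] by (simp add: phi_def)
  have "pistar Y tgt r \<beta> x y = tilted y" if "y \<in> Y" for y
    using weighted_phi that unfolding pistar_def tilted_def mean_def by simp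
  then have KL_eq:
    "KL_cond Y (smc Y tgt gen r \<beta> N x) (pistar Y tgt r \<beta> x) = KL_cond Y (resample N) tilted"
    unfolding KL_cond_def smc_def resample_def iid_expect_def by (intro sum.cong) simp_all
  have tilted_pos_Y: "0 < tilted y" if "y \<in> Y" for y
    using tilted_pos gen_pos that by blast
  show "0 \<le> KL_cond Y (smc Y tgt gen r \<beta> N x) (pistar Y tgt r \<beta> x)"
    unfolding KL_eq using assms(6)
    by (intro KL_cond_nonneg finite_support sum_tilted sum_resample tilted_pos_Y resample_nonneg)
  show "KL_cond Y (smc Y tgt gen r \<beta> N x) (pistar Y tgt r \<beta> x) \<le> ln (b / a)"
    unfolding KL_eq using assms(6)
    by (intro KL_cond_le_ln finite_support sum_resample tilted_pos_Y resample_nonneg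
        resample_le_tilted)
  assume "b / a \<le> N"
  then have "KL_cond Y (resample N) tilted \<le> (3 * (b / a) / N)\<^sup>2"
    using assms(6)
    by (intro KL_cond_le_square_of_relative_error finite_support sum_tilted sum_resample
        tilted_pos_Y resample_nonneg resample_close_tilted)
  then show "KL_cond Y (smc Y tgt gen r \<beta> N x) (pistar Y tgt r \<beta> x) \<le> 9 * (b / a)\<^sup>2 / (real N)\<^sup>2"
    unfolding KL_eq by (simp add: power_divide power_mult_distrib)
qed

lemma KL_avg_nonneg:
  "(\<And>x. x \<in> X \<Longrightarrow> 0 \<le> KL_cond Y (p x) (q x)) \<Longrightarrow> 0 \<le> KL_avg X Y \<rho> p q"
  unfolding KL_avg_def by (intro sum_nonneg mult_nonneg_nonneg) auto

lemma KL_avg_le: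
  assumes "finite X" "set_pmf \<rho> \<subseteq> X" "\<And>x. x \<in> X \<Longrightarrow> KL_cond Y (p x) (q x) \<le> B"
  shows "KL_avg X Y \<rho> p q \<le> B"
proof -
  have "KL_avg X Y \<rho> p q \<le> (\<Sum>x\<in>X. pmf \<rho> x * B)"
    unfolding KL_avg_def using assms(3) by (intro sum_mono mult_left_mono) auto
  also have "\<dots> = B"
    using sum_pmf_eq_1[OF assms(1,2)] by (simp add: sum_distrib_right[symmetric])
  finally show ?thesis .
qed

lemma phi_min_le:
  "finite X \<Longrightarrow> finite Y \<Longrightarrow> x \<in> X \<Longrightarrow> y \<in> Y \<Longrightarrow> phi_min X Y tgt gen r \<beta> \<le> phi tgt gen r \<beta> x y"
  unfolding phi_min_def by (rule Min_le) force+

lemma phi_max_ge: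
  "finite X \<Longrightarrow> finite Y \<Longrightarrow> x \<in> X \<Longrightarrow> y \<in> Y \<Longrightarrow> phi tgt gen r \<beta> x y \<le> phi_max X Y tgt gen r \<beta>"
  unfolding phi_max_def by (rule Max_ge) force+

lemma KL_avg_smc_pistar:
  assumes "finite X" "finite Y" "set_pmf \<rho> \<subseteq> X" "\<And>x. x \<in> X \<Longrightarrow> set_pmf (gen x) = Y"
    and "0 < phi_min X Y tgt gen r \<beta>" "1 \<le> N"
  defines "\<kappa> \<equiv> phi_max X Y tgt gen r \<beta> / phi_min X Y tgt gen r \<beta>"
  shows "0 \<le> KL_avg X Y \<rho> (smc Y tgt gen r \<beta> N) (pistar Y tgt r \<beta>)"
    and "KL_avg X Y \<rho> (smc Y tgt gen r \<beta> N) (pistar Y tgt r \<beta>) \<le> ln \<kappa>"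
    and "\<kappa> \<le> N \<Longrightarrow> KL_avg X Y \<rho> (smc Y tgt gen r \<beta> N) (pistar Y tgt r \<beta>) \<le> 9 * \<kappa>\<^sup>2 / (real N)\<^sup>2"
proof -
  have KL_x: "0 \<le> KL_cond Y (smc Y tgt gen r \<beta> N x) (pistar Y tgt r \<beta> x)"
    "KL_cond Y (smc Y tgt gen r \<beta> N x) (pistar Y tgt r \<beta> x) \<le> ln \<kappa>"
    "\<kappa> \<le> N \<Longrightarrow> KL_cond Y (smc Y tgt gen r \<beta> N x) (pistar Y tgt r \<beta> x) \<le> 9 * \<kappa>\<^sup>2 / (real N)\<^sup>2"
    if "x \<in> X" for x
    using KL_cond_smc_pistar[OF assms(2) assms(4)[OF that] assms(5)
        phi_min_le[OF assms(1,2) that] phi_max_ge[OF assms(1,2) that] assms(6)]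
    unfolding \<kappa>_def by blast+
  show "0 \<le> KL_avg X Y \<rho> (smc Y tgt gen r \<beta> N) (pistar Y tgt r \<beta>)"
    using KL_x(1) by (intro KL_avg_nonneg)
  show "KL_avg X Y \<rho> (smc Y tgt gen r \<beta> N) (pistar Y tgt r \<beta>) \<le> ln \<kappa>"
    using KL_x(2) by (intro KL_avg_le assms(1,3))
  show "KL_avg X Y \<rho> (smc Y tgt gen r \<beta> N) (pistar Y tgt r \<beta>) \<le> 9 * \<kappa>\<^sup>2 / (real N)\<^sup>2"
    if "\<kappa> \<le> N"
    using KL_x(3) that by (intro KL_avg_le assms(1,3))
qed

section \<open>Averaging over a Poisson number of particles\<close>

lemma exp_series_sums: "(\<lambda>N. x ^ N / fact N) sums exp (x::real)"
  using exp_converges[of x] by (simp add: divide_inverse mult.commute)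

lemma poi_pos_nonneg: "0 < m \<Longrightarrow> 0 \<le> poi_pos m N"
  unfolding poi_pos_def by (auto intro!: divide_nonneg_pos)

lemma poi_pos_le: "1 \<le> m \<Longrightarrow> poi_pos m N \<le> 2 * (exp (- m) * (m ^ N / fact N))"
proof -
  assume "1 \<le> m"
  then have "2 \<le> exp m"
    using exp_ge_add_one_self[of m] by linarith
  then have "exp (- m) \<le> 1 / 2"
    by (simp add: exp_minus field_simps)
  then show ?thesis
    using \<open>1 \<le> m\<close> unfolding poi_pos_def by (auto simp: field_simps)
qed

text \<open>Chernoff bound for the lower tail: on N \<le> m/2 the Poisson weights are dominated by
  exp(-m/2) times the terms of the exponential series of m/e.\<close>

lemma poisson_term_le_tilted:
  assumes "2 * real N \<le> m"
  shows "exp (- m) * (m ^ N / fact N) \<le> exp (- m / 2) * ((m * exp (- 1)) ^ N / fact N)"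
proof -
  have "exp (- m) \<le> exp (- m / 2) * exp (- 1) ^ N"
    using assms by (simp add: exp_of_nat_mult[symmetric] exp_add[symmetric])
  then have "exp (- m) * m ^ N \<le> exp (- m / 2) * exp (- 1) ^ N * m ^ N"
    using assms by (intro mult_right_mono) auto
  then show ?thesis
    by (simp add: power_mult_distrib divide_right_mono mult_ac)
qed

lemma exp_neg_tenth_le: "0 < x \<Longrightarrow> exp (- x / 10) \<le> 200 / (x::real)\<^sup>2"
proof -
  assume "0 < x"
  then have "x\<^sup>2 / 200 \<le> exp (x / 10)"
    using exp_lower_Taylor_quadratic[of "x / 10"] by (simp add: power_divide)
  then show ?thesis
    using \<open>0 < x\<close> by (simp add: exp_minus field_simps)
qed

lemma ln_le_square: "1 \<le> x \<Longrightarrow> ln x \<le> (x::real)\<^sup>2"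
proof -
  assume "1 \<le> x"
  then have "x * 1 \<le> x * x"
    by (intro mult_left_mono) auto
  moreover have "ln x \<le> x - 1"
    using \<open>1 \<le> x\<close> by (intro ln_le_minus_one) simp
  ultimately show ?thesis
    by (simp add: power2_eq_square)
qed

lemma exp_minus_one_le: "exp (- 1 :: real) \<le> 2 / 5"
  using exp_lower_Taylor_quadratic[of 1] by (simp add: exp_minus field_simps)

lemma tilted_poisson_mass_le: "0 < (m::real) \<Longrightarrow> exp (- m / 2 + m * exp (- 1)) \<le> 200 / m\<^sup>2"
proof -
  assume "0 < m"
  then have "m * exp (- 1) \<le> m * (2 / 5)"
    using exp_minus_one_le by (intro mult_left_mono) auto
  then have "exp (- m / 2 + m * exp (- 1)) \<le> exp (- m / 10)"
    by simp
  then show ?thesis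
    using exp_neg_tenth_le[OF \<open>0 < m\<close>] by linarith
qed

text \<open>This is where the factor (ln m)^2 comes from: for large \<kappa> only the bound ln \<kappa> is
  available.\<close>

lemma ln_le_of_ratio_gt_half:
  fixes m \<kappa> :: real
  assumes "exp 1 \<le> m" "m < 2 * \<kappa>"
  shows "ln \<kappa> \<le> 6 * (ln m)\<^sup>2 * (\<kappa> / m)\<^sup>2"
proof -
  define t where "t = \<kappa> / m"
  have m_pos: "0 < m"
    using assms(1) exp_gt_zero[of 1] by linarith
  have L: "1 \<le> ln m"
    using assms(1) m_pos by (simp add: ln_ge_iff)
  have L2: "1 \<le> (ln m)\<^sup>2"
    using L by (simp add: one_le_power)
  have t: "1 < 2 * t"
    using assms(2) m_pos unfolding t_def by (simp add: field_simps)
  have split: "ln \<kappa> = ln m + ln t"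
    unfolding t_def using m_pos t by (simp add: ln_div t_def)
  have "ln t \<le> t - 1"
    using t by (intro ln_le_minus_one) simp
  also have "\<dots> \<le> 2 * t\<^sup>2"
  proof -
    have "t * 1 \<le> t * (2 * t)"
      using t by (intro mult_left_mono) auto
    then show ?thesis
      by (simp add: power2_eq_square)
  qed
  also have "\<dots> \<le> 2 * t\<^sup>2 * (ln m)\<^sup>2"
    using mult_left_mono[OF L2, of "2 * t\<^sup>2"] by simp
  finally have ln_t: "ln t \<le> 2 * t\<^sup>2 * (ln m)\<^sup>2" .
  have "ln m \<le> (ln m)\<^sup>2"
    using L by (simp add: power2_eq_square)
  also have "\<dots> \<le> (2 * t)\<^sup>2 * (ln m)\<^sup>2"
    using mult_right_mono[OF one_le_power[of "2 * t" 2], of "(ln m)\<^sup>2"] t by simp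
  finally have ln_m: "ln m \<le> 4 * t\<^sup>2 * (ln m)\<^sup>2"
    by (simp add: power_mult_distrib)
  have "ln \<kappa> \<le> 6 * t\<^sup>2 * (ln m)\<^sup>2"
    using split ln_t ln_m by linarith
  then show ?thesis
    unfolding t_def by (simp add: mult_ac)
qed

lemma sample_size_ge_half_bound:
  fixes d m n \<kappa> :: real
  assumes "exp 1 \<le> m" "m \<le> 2 * n" "d \<le> ln \<kappa>" "\<kappa> \<le> n \<Longrightarrow> d \<le> 9 * \<kappa>\<^sup>2 / n\<^sup>2"
  shows "d \<le> 36 * (ln m)\<^sup>2 * (\<kappa> / m)\<^sup>2"
proof (cases "\<kappa> \<le> n")
  case True
  have m_pos: "0 < m"
    using assms(1) exp_gt_zero[of 1] by linarith
  have "1 \<le> ln m"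
    using assms(1) m_pos by (simp add: ln_ge_iff)
  then have L: "1 \<le> (ln m)\<^sup>2"
    by (simp add: one_le_power)
  have "d \<le> 9 * \<kappa>\<^sup>2 / n\<^sup>2"
    using assms(4) True .
  also have "\<dots> \<le> 9 * \<kappa>\<^sup>2 / (m / 2)\<^sup>2"
    using assms(2) m_pos by (intro divide_left_mono power_mono) auto
  also have "\<dots> = 36 * (\<kappa> / m)\<^sup>2"
    by (simp add: power_divide)
  also have "\<dots> \<le> 36 * (ln m)\<^sup>2 * (\<kappa> / m)\<^sup>2"
    using L by (simp add: mult_right_mono)
  finally show ?thesis .
next
  case False
  then have "m < 2 * \<kappa>"
    using assms(2) by linarith
  then have "d \<le> 6 * (ln m)\<^sup>2 * (\<kappa> / m)\<^sup>2"
    using assms(3) ln_le_of_ratio_gt_half[OF assms(1) \<open>m < 2 * \<kappa>\<close>] by linarith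
  moreover have "0 \<le> (ln m)\<^sup>2 * (\<kappa> / m)\<^sup>2"
    by simp
  ultimately show ?thesis
    by linarith
qed

lemma poi_pos_mult_le_majorant:
  fixes D :: "nat \<Rightarrow> real" and m \<kappa> :: real
  assumes m: "exp 1 \<le> m" and \<kappa>: "1 \<le> \<kappa>"
    and D_nonneg: "\<And>N. 1 \<le> N \<Longrightarrow> 0 \<le> D N"
    and D_le_ln: "\<And>N. 1 \<le> N \<Longrightarrow> D N \<le> ln \<kappa>"
    and D_le_square: "\<And>N. 1 \<le> N \<Longrightarrow> \<kappa> \<le> N \<Longrightarrow> D N \<le> 9 * \<kappa>\<^sup>2 / (real N)\<^sup>2"
  shows "poi_pos m N * D N \<le> 72 * (ln m)\<^sup>2 * (\<kappa> / m)\<^sup>2 * (exp (- m) * (m ^ N / fact N))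
    + 2 * \<kappa>\<^sup>2 * (exp (- m / 2) * ((m * exp (- 1)) ^ N / fact N))"
proof -
  define p where "p = exp (- m) * (m ^ N / fact N)"
  define q where "q = exp (- m / 2) * ((m * exp (- 1)) ^ N / fact N)"
  define B where "B = 36 * (ln m)\<^sup>2 * (\<kappa> / m)\<^sup>2"
  have m_ge: "1 \<le> m"
    using m exp_ge_add_one_self[of "1 :: real"] by linarith
  have p_nonneg: "0 \<le> p" and q_nonneg: "0 \<le> q" and B_nonneg: "0 \<le> B"
    unfolding p_def q_def B_def using m_ge by simp_all
  have poi: "0 \<le> poi_pos m N" "poi_pos m N \<le> 2 * p"
    unfolding p_def using poi_pos_nonneg poi_pos_le m_ge by simp_all
  consider "N = 0" | "1 \<le> N" "m \<le> 2 * real N" | "1 \<le> N" "2 * real N \<le> m"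
    by linarith
  then have "poi_pos m N * D N \<le> 2 * p * B + 2 * q * \<kappa>\<^sup>2"
  proof cases
    case 1
    then show ?thesis
      using p_nonneg q_nonneg B_nonneg by (simp add: poi_pos_def)
  next
    case 2
    then have "D N \<le> B"
      unfolding B_def using sample_size_ge_half_bound[OF m 2(2) D_le_ln D_le_square] by simp
    then have "poi_pos m N * D N \<le> 2 * p * B"
      using poi D_nonneg[OF 2(1)] by (intro mult_mono) auto
    then show ?thesis
      using q_nonneg by (simp add: add_increasing2)
  next
    case 3
    have "poi_pos m N \<le> 2 * q"
      using poi(2) poisson_term_le_tilted[OF 3(2)] unfolding p_def q_def by simp
    then have "poi_pos m N * D N \<le> 2 * q * \<kappa>\<^sup>2"
      using poi(1) D_nonneg[OF 3(1)] D_le_ln[OF 3(1)] ln_le_square[OF \<kappa>]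
      by (intro mult_mono) auto
    then show ?thesis
      using p_nonneg B_nonneg by (simp add: add_increasing)
  qed
  also have "2 * p * B + 2 * q * \<kappa>\<^sup>2 = 72 * (ln m)\<^sup>2 * (\<kappa> / m)\<^sup>2 * p + 2 * \<kappa>\<^sup>2 * q"
    unfolding B_def by (simp only: mult_ac)
  finally show ?thesis
    unfolding p_def q_def .
qed

lemma poisson_mixture_le:
  fixes D :: "nat \<Rightarrow> real" and m \<kappa> :: real
  assumes m: "exp 1 \<le> m" and \<kappa>: "1 \<le> \<kappa>"
    and D_nonneg: "\<And>N. 1 \<le> N \<Longrightarrow> 0 \<le> D N"
    and D_le_ln: "\<And>N. 1 \<le> N \<Longrightarrow> D N \<le> ln \<kappa>"
    and D_le_square: "\<And>N. 1 \<le> N \<Longrightarrow> \<kappa> \<le> N \<Longrightarrow> D N \<le> 9 * \<kappa>\<^sup>2 / (real N)\<^sup>2"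
  shows "summable (\<lambda>N. poi_pos m N * D N) \<and>
    (\<Sum>N. poi_pos m N * D N) \<le> 472 * (ln m)\<^sup>2 / m\<^sup>2 * \<kappa>\<^sup>2"
proof -
  define h where "h N = 72 * (ln m)\<^sup>2 * (\<kappa> / m)\<^sup>2 * (exp (- m) * (m ^ N / fact N))
    + 2 * \<kappa>\<^sup>2 * (exp (- m / 2) * ((m * exp (- 1)) ^ N / fact N))" for N
  have m_pos: "0 < m"
    using m exp_gt_zero[of 1] by linarith
  have L: "1 \<le> (ln m)\<^sup>2"
    using m m_pos by (simp add: ln_ge_iff one_le_power)
  have "h sums (72 * (ln m)\<^sup>2 * (\<kappa> / m)\<^sup>2 * (exp (- m) * exp m)
      + 2 * \<kappa>\<^sup>2 * (exp (- m / 2) * exp (m * exp (- 1))))"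
    unfolding h_def by (intro sums_add sums_mult exp_series_sums)
  then have h_sums: "h sums (72 * (ln m)\<^sup>2 * (\<kappa> / m)\<^sup>2
      + 2 * \<kappa>\<^sup>2 * exp (- m / 2 + m * exp (- 1)))"
    by (simp add: exp_add[symmetric])
  have le_h: "poi_pos m N * D N \<le> h N" for N
    unfolding h_def using poi_pos_mult_le_majorant[OF assms] .
  have nonneg: "0 \<le> poi_pos m N * D N" for N
  proof (cases "N = 0")
    case False
    then show ?thesis
      by (intro mult_nonneg_nonneg poi_pos_nonneg m_pos D_nonneg) simp
  qed (simp add: poi_pos_def)
  have summable: "summable (\<lambda>N. poi_pos m N * D N)"
    using le_h nonneg by (intro summable_comparison_test'[OF sums_summable[OF h_sums], of 0]) simp
  have "(\<Sum>N. poi_pos m N * D N) \<le> (\<Sum>N. h N)"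
    by (rule suminf_le[OF le_h summable sums_summable[OF h_sums]])
  also have "\<dots> = 72 * (ln m)\<^sup>2 * (\<kappa> / m)\<^sup>2 + 2 * \<kappa>\<^sup>2 * exp (- m / 2 + m * exp (- 1))"
    using h_sums by (simp add: sums_iff)
  also have "\<dots> \<le> 72 * (ln m)\<^sup>2 * (\<kappa> / m)\<^sup>2 + 2 * \<kappa>\<^sup>2 * (200 / m\<^sup>2)"
    using mult_left_mono[OF tilted_poisson_mass_le[OF m_pos], of "2 * \<kappa>\<^sup>2"] by simp
  also have "\<dots> = 72 * ((ln m)\<^sup>2 * (\<kappa>\<^sup>2 / m\<^sup>2)) + 400 * (\<kappa>\<^sup>2 / m\<^sup>2)"
    by (simp add: power_divide)
  also have "\<dots> \<le> 472 * ((ln m)\<^sup>2 * (\<kappa>\<^sup>2 / m\<^sup>2))"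
    using mult_right_mono[OF L, of "\<kappa>\<^sup>2 / m\<^sup>2"] by simp
  finally show ?thesis
    using summable by simp
qed

lemma KL_smc_poisson_mixture_le:
  assumes "finite X" "X \<noteq> {}" "finite Y" "Y \<noteq> {}" "set_pmf \<rho> \<subseteq> X"
    and "\<And>x. x \<in> X \<Longrightarrow> set_pmf (gen x) = Y" "0 < phi_min X Y tgt gen r \<beta>" "3 \<le> n"
  defines "\<kappa> \<equiv> phi_max X Y tgt gen r \<beta> / phi_min X Y tgt gen r \<beta>"
  shows "summable (\<lambda>N. poi_pos (real n) N * KL_avg X Y \<rho> (smc Y tgt gen r \<beta> N) (pistar Y tgt r \<beta>))
    \<and> (\<Sum>N. poi_pos (real n) N * KL_avg X Y \<rho> (smc Y tgt gen r \<beta> N) (pistar Y tgt r \<beta>))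
      \<le> 472 * (ln (real n))\<^sup>2 / (real n)\<^sup>2 * \<kappa>\<^sup>2"
proof (rule poisson_mixture_le)
  obtain x y where "x \<in> X" "y \<in> Y"
    using assms(2,4) by blast
  then have "phi_min X Y tgt gen r \<beta> \<le> phi_max X Y tgt gen r \<beta>"
    using phi_min_le[OF assms(1,3)] phi_max_ge[OF assms(1,3)] order_trans by blast
  then show "1 \<le> \<kappa>"
    unfolding \<kappa>_def using assms(7) by simp
  show "exp 1 \<le> real n"
    using exp_le assms(8) by linarith
qed (use KL_avg_smc_pistar[OF assms(1,3,5,6,7), folded \<kappa>_def] in auto)

theorem theoremB7:
  "\<exists>C::real. \<forall>X Y (\<rho>::nat pmf) (tgt::nat \<Rightarrow> nat pmf) (gen::nat \<Rightarrow> nat pmf)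
      (r::nat \<Rightarrow> nat \<Rightarrow> real) (\<beta>::real) (n::nat).
     finite X \<and> X \<noteq> {} \<and> finite Y \<and> Y \<noteq> {} \<and>
     set_pmf \<rho> \<subseteq> X \<and>
     (\<forall>x\<in>X. set_pmf (gen x) = Y \<and> set_pmf (tgt x) \<subseteq> Y) \<and>
     \<beta> > 0 \<and> phi_min X Y tgt gen r \<beta> > 0 \<and> n \<ge> 3
     \<longrightarrow>
     (let E = (\<lambda>N. poi_pos (real n) N *
                   KL_avg X Y \<rho> (smc Y tgt gen r \<beta> N) (pistar Y tgt r \<beta>))
      in summable E \<and>
         suminf E \<le> C * (ln (real n))\<^sup>2 / (real n)\<^sup>2 *
                       (phi_max X Y tgt gen r \<beta> / phi_min X Y tgt gen r \<beta>)\<^sup>2)"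
  unfolding Let_def by (intro exI[of _ 472] allI impI KL_smc_poisson_mixture_le) auto

end
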